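(* Let $c_0\in\mathbb C$ with $c_0\notin\{-1,-3,-5,\dots\}$. Then for all $0\le k\le n$, $$E_{n,k}(-1,2;c_0,0)=(c_0)^{\overline n}\frac{(-\frac n2)^{\overline k}(-\frac n2+\frac12)^{\overline k}}{k!\,(\frac{c_0}2+\frac12)^{\overline k}},\qquad E_{n,k}(-1,2;c_0+1,1)=(c_0+1)^{\overline n}\frac{(-\frac n2)^{\overline k}(-\frac n2-\frac12)^{\overline k}}{k!\,(\frac{c_0}2+\frac12)^{\overline k}}.$$ These are nonzero only if $0\le k\le\lfloor n/2\rfloor$, resp. $0\le k\le\lfloor (n+1)/2\rfloor$. Equivalently, the $n$th row polynomials are $(c_0)^{\overline n}\,{}_2F_1(-\frac n2,-\frac n2+\frac12;\frac{c_0}2+\frac12\mid t)$, resp. $(c_0+1)^{\overline n}\,{}_2F_1(-\frac n2,-\frac n2-\frac12;\frac{c_0}2+\frac12\mid t)$.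
   Context: Generalized Eulerian numbers $E_{n,k}(a,b;c_0,c_\infty)$: defined by $E_{0,0}=1$, $E_{n,k}=0$ if $n<0$, $k<0$ or $k>n$, and $E_{n+1,k+1}=[-an+b(k+1)+c_0]E_{n,k+1}+[(a+b)n-bk+c_\infty]E_{n,k}$ for $n\ge0$, $k\in\mathbb Z$; row polynomial $\sum_{k=0}^nE_{n,k}t^k$. $x^{\overline k}=x(x+1)\cdots(x+k-1)$; ${}_2F_1(A,B;C\mid w)=\sum_{k\ge0}\frac{A^{\overline k}B^{\overline k}}{k!\,C^{\overline k}}w^k$. *)

theory Defs
  imports Complex_Main
begin

text \<open>Generalized Eulerian numbers E_{n,k}(a,b;c0,cinf), with k ranging over the integers.\<close>
fun genEuler :: "complex \<Rightarrow> complex \<Rightarrow> complex \<Rightarrow> complex \<Rightarrow> nat \<Rightarrow> int \<Rightarrow> complex" where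
  "genEuler a b c0 ci 0 k = (if k = 0 then 1 else 0)"
| "genEuler a b c0 ci (Suc n) k =
     (if k < 0 \<or> k > int (Suc n) then 0
      else (- a * of_nat n + b * of_int k + c0) * genEuler a b c0 ci n k
         + ((a + b) * of_nat n - b * of_int (k - 1) + ci) * genEuler a b c0 ci n (k - 1))"

definition rowPoly :: "complex \<Rightarrow> complex \<Rightarrow> complex \<Rightarrow> complex \<Rightarrow> nat \<Rightarrow> complex \<Rightarrow> complex" where
  "rowPoly a b c0 ci n t = (\<Sum>k\<le>n. genEuler a b c0 ci n (int k) * t ^ k)"

definition hyp2F1 :: "complex \<Rightarrow> complex \<Rightarrow> complex \<Rightarrow> complex \<Rightarrow> complex" where
  "hyp2F1 A B C w = (\<Sum>k. pochhammer A k * pochhammer B k / (fact k * pochhammer C k) * w ^ k)"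

end

theory Submission
  imports Defs
begin

text \<open>Both families are the case \<open>s \<in> {0, 1}\<close> of \<open>E(-1, 2; c + s, s)\<close>.  Writing \<open>(a)\<^sub>k\<close> for
  the rising factorial and \<open>x = n + s\<close>, Legendre duplication turns the claimed coefficient into
  \<open>(c + s)\<^sub>n (-x)\<^sub>2\<^sub>k / (4\<^sup>k k! ((c + 1)/2)\<^sub>k)\<close>.  Cleared of denominators this holds for every
  \<open>c\<close> by induction on \<open>n\<close>: the recurrence reduces it to
  \<open>(x + c + m + 1)(x - m) + (m + 1)(c + m) = (x + c)(x + 1)\<close> with \<open>m = 2k - 1\<close>, so the
  hypothesis on \<open>c\<close> is only needed to divide.  Since \<open>(-x)\<^sub>2\<^sub>k = 0\<close> for \<open>2k > x\<close>, the
  support bounds follow and the hypergeometric series terminates.\<close>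

lemma genEuler_neg_index: "k < 0 \<Longrightarrow> genEuler a b c0 ci n k = 0"
  by (induction n arbitrary: k) auto

lemma genEuler_above_degree: "int n < k \<Longrightarrow> genEuler a b c0 ci n k = 0"
  by (cases n) auto

lemma pochhammer_half_pair:
  fixes x :: "'a::field_char_0"
  shows "pochhammer (- x / 2) k * pochhammer (- x / 2 + 1/2) k = pochhammer (- x) (2 * k) / 4 ^ k"
  using pochhammer_double[of "- x / 2" k] by (simp add: power_mult)

text \<open>The base case needs \<open>s \<le> 1\<close>: it requires \<open>(-s)\<^sub>2\<^sub>k = 0\<close> for all \<open>k \<ge> 1\<close>.\<close>
lemma genEuler_minus1_2_cleared:
  fixes c :: complex
  assumes "s \<le> 1"
  shows "4 ^ k * fact k * pochhammer (c / 2 + 1/2) k * genEuler (-1) 2 (c + of_nat s) (of_nat s) n (int k)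
           = pochhammer (c + of_nat s) n * pochhammer (- of_nat (n + s)) (2 * k)"
proof (induction n arbitrary: k)
  case 0
  show ?case
  proof (cases k)
    case (Suc j)
    with assms have "pochhammer (- of_nat s :: complex) (2 * k) = 0"
      by (simp add: pochhammer_of_nat_eq_0_iff)
    with Suc show ?thesis by simp
  qed simp
next
  case (Suc n)
  define D :: "nat \<Rightarrow> complex" where "D k = 4 ^ k * fact k * pochhammer (c / 2 + 1/2) k" for k
  define E where "E n k = genEuler (-1) 2 (c + of_nat s) (of_nat s) n (int k)" for n k
  define p where "p = pochhammer (c + of_nat s) n"
  define x :: complex where "x = of_nat (n + s)"
  have IH: "D k * E n k = p * pochhammer (- x) (2 * k)" for k
    using Suc.IH unfolding D_def E_def p_def x_def .
  have P: "pochhammer (c + of_nat s) (Suc n) = p * (c + x)"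
    by (simp add: p_def x_def pochhammer_Suc algebra_simps)
  consider "k = 0" | j where "k = Suc j" "k \<le> Suc n" | "Suc n < k"
    by (cases k) force+
  then show ?case
  proof cases
    case 1
    have "E (Suc n) 0 = (c + x) * E n 0"
      by (simp add: E_def x_def genEuler_neg_index algebra_simps)
    with IH[of 0] P show ?thesis by (simp add: 1 D_def E_def)
  next
    case 2
    then have k: "k = Suc j" "k \<le> Suc n" by auto
    have rec: "E (Suc n) (Suc j) = (x + 2 * of_nat (Suc j) + c) * E n (Suc j) + (x - 2 * of_nat j) * E n j"
      using k by (simp add: E_def x_def algebra_simps)
    have D: "D (Suc j) = 2 * of_nat (Suc j) * (c + 2 * of_nat j + 1) * D j"
      by (simp add: D_def pochhammer_Suc field_simps)
    have Q0: "pochhammer (- x) (2 * Suc j) = pochhammer (- x) (2 * j) * ((- x + 2 * of_nat j) * (- x + 2 * of_nat j + 1))"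
      by (simp add: pochhammer_Suc algebra_simps)
    have Q1: "pochhammer (- (x + 1)) (2 * Suc j) = - (x + 1) * (- x + 2 * of_nat j) * pochhammer (- x) (2 * j)"
    proof -
      have "pochhammer (- (x + 1)) (2 * Suc j) = - (x + 1) * pochhammer (- x) (Suc (2 * j))"
        using pochhammer_rec[of "- (x + 1)" "Suc (2 * j)"] by simp
      then show ?thesis by (simp add: pochhammer_Suc)
    qed
    have "D (Suc j) * E (Suc n) (Suc j)
        = (x + 2 * of_nat (Suc j) + c) * (D (Suc j) * E n (Suc j))
          + (x - 2 * of_nat j) * (2 * of_nat (Suc j) * (c + 2 * of_nat j + 1)) * (D j * E n j)"
      unfolding rec D by (simp add: algebra_simps)
    also have "\<dots> = p * (c + x) * pochhammer (- (x + 1)) (2 * Suc j)"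
      unfolding IH Q0 Q1 by (simp add: algebra_simps)
    finally show ?thesis
      using P by (simp add: k D_def E_def x_def)
  next
    case 3
    have "pochhammer (- of_nat (Suc n + s) :: complex) (2 * k) = 0"
      using 3 assms by (intro pochhammer_of_nat_eq_0_lemma) linarith
    with 3 show ?thesis by (simp add: genEuler_above_degree)
  qed
qed

lemma pochhammer_half_pair_eq_0:
  assumes "m < 2 * k"
  shows "pochhammer (- of_nat m / 2 :: 'a::field_char_0) k * pochhammer (- of_nat m / 2 + 1/2) k = 0"
  unfolding pochhammer_half_pair using assms by (simp add: pochhammer_of_nat_eq_0_iff)

lemma pochhammer_half_odd_nonzero:
  fixes c :: "'a::field_char_0"
  assumes "\<forall>m::nat. c \<noteq> - of_nat (2 * m + 1)"
  shows "pochhammer (c / 2 + 1/2) k \<noteq> 0"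
proof
  assume "pochhammer (c / 2 + 1/2) k = 0"
  then obtain m where "c / 2 + 1/2 = - of_nat m" by (auto simp: pochhammer_eq_0_iff)
  then have "c = - of_nat (2 * m + 1)"
    by (simp add: field_simps) (simp add: algebra_simps flip: add_eq_0_iff2)
  with assms show False by blast
qed

lemma genEuler_minus1_2:
  fixes c :: complex
  assumes "s \<le> 1" and "\<forall>m::nat. c \<noteq> - of_nat (2 * m + 1)"
  shows "genEuler (-1) 2 (c + of_nat s) (of_nat s) n (int k) =
           pochhammer (c + of_nat s) n
           * (pochhammer (- of_nat (n + s) / 2) k * pochhammer (- of_nat (n + s) / 2 + 1/2) k
              / (fact k * pochhammer (c / 2 + 1/2) k))"
proof -
  have "4 ^ k * fact k * pochhammer (c / 2 + 1/2) k \<noteq> (0 :: complex)"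
    using pochhammer_half_odd_nonzero[OF assms(2)] by simp
  with genEuler_minus1_2_cleared[OF assms(1), of k c n]
  have "genEuler (-1) 2 (c + of_nat s) (of_nat s) n (int k)
        = pochhammer (c + of_nat s) n * pochhammer (- of_nat (n + s)) (2 * k)
          / (4 ^ k * fact k * pochhammer (c / 2 + 1/2) k)"
    by (simp add: eq_divide_eq ac_simps)
  then show ?thesis unfolding pochhammer_half_pair by (simp add: ac_simps)
qed

lemma genEuler_minus1_2_support:
  fixes c :: complex
  assumes "s \<le> 1" and "\<forall>m::nat. c \<noteq> - of_nat (2 * m + 1)"
    and "genEuler (-1) 2 (c + of_nat s) (of_nat s) n k \<noteq> 0"
  shows "0 \<le> k \<and> k \<le> int ((n + s) div 2)"
proof -
  have "0 \<le> k" using assms(3) genEuler_neg_index by force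
  then obtain k' where k': "k = int k'" by (metis nonneg_int_cases)
  have "\<not> n + s < 2 * k'"
    using assms(3) genEuler_minus1_2[OF assms(1,2), of n k'] pochhammer_half_pair_eq_0[of "n + s" k']
    by (auto simp: k')
  with k' show ?thesis by simp
qed

lemma rowPoly_eq_hyp2F1:
  assumes "\<And>k. k \<le> n \<Longrightarrow> genEuler a b c0 ci n (int k)
             = P * (pochhammer A k * pochhammer B k / (fact k * pochhammer C k))"
    and "\<And>k. n < k \<Longrightarrow> pochhammer A k * pochhammer B k = 0"
  shows "rowPoly a b c0 ci n t = P * hyp2F1 A B C t"
proof -
  have "hyp2F1 A B C t = (\<Sum>k\<le>n. pochhammer A k * pochhammer B k / (fact k * pochhammer C k) * t ^ k)"
    unfolding hyp2F1_def by (rule suminf_finite) (auto simp: assms(2))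
  then show ?thesis
    by (simp add: rowPoly_def assms(1) sum_distrib_left mult.assoc)
qed

theorem mainTheorem18:
  fixes c0 :: complex
  assumes "\<forall>m::nat. c0 \<noteq> - of_nat (2 * m + 1)"
  shows "(\<forall>n k::nat. k \<le> n \<longrightarrow>
            genEuler (-1) 2 c0 0 n (int k) =
              pochhammer c0 n * (pochhammer (- of_nat n / 2) k * pochhammer (- of_nat n / 2 + 1/2) k
                / (fact k * pochhammer (c0 / 2 + 1/2) k))
          \<and> genEuler (-1) 2 (c0 + 1) 1 n (int k) =
              pochhammer (c0 + 1) n * (pochhammer (- of_nat n / 2) k * pochhammer (- of_nat n / 2 - 1/2) k
                / (fact k * pochhammer (c0 / 2 + 1/2) k)))
       \<and> (\<forall>(n::nat) (k::int). genEuler (-1) 2 c0 0 n k \<noteq> 0 \<longrightarrow> 0 \<le> k \<and> k \<le> int (n div 2))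
       \<and> (\<forall>(n::nat) (k::int). genEuler (-1) 2 (c0 + 1) 1 n k \<noteq> 0 \<longrightarrow> 0 \<le> k \<and> k \<le> int ((n + 1) div 2))
       \<and> (\<forall>(n::nat) (t::complex).
            rowPoly (-1) 2 c0 0 n t =
              pochhammer c0 n * hyp2F1 (- of_nat n / 2) (- of_nat n / 2 + 1/2) (c0 / 2 + 1/2) t
          \<and> rowPoly (-1) 2 (c0 + 1) 1 n t =
              pochhammer (c0 + 1) n * hyp2F1 (- of_nat n / 2) (- of_nat n / 2 - 1/2) (c0 / 2 + 1/2) t)"
proof -
  have shift: "- of_nat (n + 1) / 2 = - of_nat n / 2 - (1/2 :: complex)"
              "- of_nat (n + 1) / 2 + 1/2 = (- of_nat n / 2 :: complex)" for n
    by (simp_all add: field_simps)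
  have E0: "genEuler (-1) 2 c0 0 n (int k) =
      pochhammer c0 n * (pochhammer (- of_nat n / 2) k * pochhammer (- of_nat n / 2 + 1/2) k
        / (fact k * pochhammer (c0 / 2 + 1/2) k))" for n k
    using genEuler_minus1_2[OF _ assms, of 0 n k] by simp
  have E1: "genEuler (-1) 2 (c0 + 1) 1 n (int k) =
      pochhammer (c0 + 1) n * (pochhammer (- of_nat n / 2) k * pochhammer (- of_nat n / 2 - 1/2) k
        / (fact k * pochhammer (c0 / 2 + 1/2) k))" for n k
    using genEuler_minus1_2[OF _ assms, of 1 n k, unfolded shift] by (simp add: mult.commute)
  have row0: "rowPoly (-1) 2 c0 0 n t =
      pochhammer c0 n * hyp2F1 (- of_nat n / 2) (- of_nat n / 2 + 1/2) (c0 / 2 + 1/2) t" for n t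
    by (rule rowPoly_eq_hyp2F1[OF E0]) (rule pochhammer_half_pair_eq_0; simp)
  have row1: "rowPoly (-1) 2 (c0 + 1) 1 n t =
      pochhammer (c0 + 1) n * hyp2F1 (- of_nat n / 2) (- of_nat n / 2 - 1/2) (c0 / 2 + 1/2) t" for n t
  proof (rule rowPoly_eq_hyp2F1[OF E1])
    show "pochhammer (- of_nat n / 2 :: complex) k * pochhammer (- of_nat n / 2 - 1/2) k = 0"
      if "n < k" for k
      using pochhammer_half_pair_eq_0[of "n + 1" k, where 'a = complex] that
      by (simp only: shift mult.commute) auto
  qed
  show ?thesis
    using E0 E1 row0 row1 genEuler_minus1_2_support[OF _ assms, of 0] genEuler_minus1_2_support[OF _ assms, of 1]
    by simp
qed

end
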